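(* (i) $U=u_1u_2u_1+u_1s_2s_1^{-1}s_2u_1+u_1s_2^{-1}s_1s_2^{-1}u_1+u_1\omega+u_1\omega^{-1}+u_1\omega^{-2}$. (ii) $H_4=U$.
   Context: Let $B_3=\langle s_1,s_2\mid s_1s_2s_1=s_2s_1s_2\rangle$, $R_4=\mathbb{Z}[a,b,c,d,d^{-1}]$, and let $H_4$ be the quotient of the group algebra $R_4B_3$ by the relations $s_i^4=as_i^3+bs_i^2+cs_i+d$ for $i=1,2$; identify $s_i$ with their images in $H_4$. For $i=1,2$ let $u_i$ be the $R_4$-subalgebra of $H_4$ generated by $s_i$. Set $\omega=s_2s_1^2s_2$. For $R_4$-submodules (or elements) $X_1,\dots,X_n$ of $H_4$, $X_1\cdots X_n$ denotes the $R_4$-submodule spanned by all products $x_1\cdots x_n$ with $x_j\in X_j$, and sums are sums of submodules. Define $U'=u_1u_2u_1+u_1s_2s_1^{-1}s_2u_1+u_1s_2^{-1}s_1s_2^{-1}u_1+u_1s_2^{-1}s_1^{-2}s_2^{-1}$ and $U=U'+u_1s_2s_1^{-2}s_2u_1+u_1s_2^{-2}s_1^{-2}s_2^{-2}u_1$. *)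

theory Defs
  imports Main
begin

text \<open>An R_4-algebra A (R_4 = Z[a,b,c,d,d^-1]) is the same as a ring A with central
elements a, b, c, d and an inverse e of d.  The image of R_4 in A is the subring
generated by a, b, c, d, e.\<close>

inductive_set scal :: "'a::ring_1 \<Rightarrow> 'a \<Rightarrow> 'a \<Rightarrow> 'a \<Rightarrow> 'a \<Rightarrow> 'a set"
  for a b c d e :: "'a::ring_1" where
  one: "1 \<in> scal a b c d e"
| ga: "a \<in> scal a b c d e"
| gb: "b \<in> scal a b c d e"
| gc: "c \<in> scal a b c d e"
| gd: "d \<in> scal a b c d e"
| ge: "e \<in> scal a b c d e"
| neg: "x \<in> scal a b c d e \<Longrightarrow> - x \<in> scal a b c d e"
| add: "x \<in> scal a b c d e \<Longrightarrow> y \<in> scal a b c d e \<Longrightarrow> x + y \<in> scal a b c d e"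
| mul: "x \<in> scal a b c d e \<Longrightarrow> y \<in> scal a b c d e \<Longrightarrow> x * y \<in> scal a b c d e"

text \<open>R-linear span of a set (scalars are central, so left multiplication suffices).\<close>
definition lspan :: "('a::ring_1) set \<Rightarrow> 'a set \<Rightarrow> 'a set" where
  "lspan R X = {\<Sum>i<n. r i * x i | (n::nat) r x. \<forall>i<n. r i \<in> R \<and> x i \<in> X}"

definition mprod2 :: "('a::ring_1) set \<Rightarrow> 'a set \<Rightarrow> 'a set \<Rightarrow> 'a set" where
  "mprod2 R X Y = lspan R {x * y | x y. x \<in> X \<and> y \<in> Y}"

definition mprod3 :: "('a::ring_1) set \<Rightarrow> 'a set \<Rightarrow> 'a set \<Rightarrow> 'a set \<Rightarrow> 'a set" where
  "mprod3 R X Y Z = lspan R {x * y * z | x y z. x \<in> X \<and> y \<in> Y \<and> z \<in> Z}"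

definition msum :: "('a::plus) set \<Rightarrow> 'a set \<Rightarrow> 'a set" (infixl "\<oplus>\<^sub>m" 65) where
  "X \<oplus>\<^sub>m Y = {x + y | x y. x \<in> X \<and> y \<in> Y}"

definition usub :: "('a::ring_1) set \<Rightarrow> 'a \<Rightarrow> 'a set" where
  "usub R s = lspan R {s ^ n | n. True}"

text \<open>Monoid generated by a set (images of the group elements of B_3).\<close>
inductive_set words :: "('a::monoid_mult) set \<Rightarrow> 'a set" for G where
  one: "1 \<in> words G"
| step: "g \<in> G \<Longrightarrow> w \<in> words G \<Longrightarrow> g * w \<in> words G"

text \<open>The modules U' and U of the paper, for scalar ring R, generators s1 s2 and
their inverses t1 t2 (u_1 = usub R s1, u_2 = usub R s2).\<close>
definition Uprime :: "('a::ring_1) set \<Rightarrow> 'a \<Rightarrow> 'a \<Rightarrow> 'a \<Rightarrow> 'a \<Rightarrow> 'a set" where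
  "Uprime R s1 s2 t1 t2 =
     mprod3 R (usub R s1) (usub R s2) (usub R s1)
     \<oplus>\<^sub>m mprod3 R (usub R s1) {s2 * t1 * s2} (usub R s1)
     \<oplus>\<^sub>m mprod3 R (usub R s1) {t2 * s1 * t2} (usub R s1)
     \<oplus>\<^sub>m mprod2 R (usub R s1) {t2 * t1 ^ 2 * t2}"

definition Ufull :: "('a::ring_1) set \<Rightarrow> 'a \<Rightarrow> 'a \<Rightarrow> 'a \<Rightarrow> 'a \<Rightarrow> 'a set" where
  "Ufull R s1 s2 t1 t2 =
     Uprime R s1 s2 t1 t2
     \<oplus>\<^sub>m mprod3 R (usub R s1) {s2 * t1 ^ 2 * s2} (usub R s1)
     \<oplus>\<^sub>m mprod3 R (usub R s1) {t2 ^ 2 * t1 ^ 2 * t2 ^ 2} (usub R s1)"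

end

theory Submission
  imports Defs
begin

text \<open>
  Write \<open>U\<^sub>\<omega>\<close> for the right-hand side of (i).  Clearly \<open>U\<close> lies in the span of the braid
  words.  That span lies in \<open>U\<^sub>\<omega>\<close> once \<open>U\<^sub>\<omega>\<close> is stable under left multiplication by \<open>s\<^sub>2\<close>:
  \<open>U\<^sub>\<omega>\<close> contains 1, is a \<open>u\<^sub>1\<close>-bimodule, and \<open>s\<^sub>2\<^sup>-\<^sup>1\<close> is a polynomial in \<open>s\<^sub>2\<close>.  Finally
  \<open>U\<^sub>\<omega> \<subseteq> U\<close> once \<open>\<omega>, \<omega>\<^sup>-\<^sup>2 \<in> U\<close>, since \<open>U\<close> is a \<open>u\<^sub>1\<close>-bimodule sharing the other four summands
  with \<open>U\<^sub>\<omega>\<close>.  Stability reduces to \<open>s\<^sub>2 s\<^sub>1\<^sup>n h \<in> U\<^sub>\<omega>\<close> for the middle factors \<open>h\<close> of the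
  summands, and by the quartic relation four consecutive exponents \<open>n\<close> suffice.

  These finitely many memberships, and \<open>\<omega>, \<omega>\<^sup>-\<^sup>2 \<in> U\<close>, are established by certificates: lists
  of elements of \<open>B\<^sub>3\<close>, each a generator of a summand, or obtained from an earlier one by
  multiplying with powers of \<open>s\<^sub>1\<close> on both sides, or by extrapolating the four-term recurrence
  along a conjugate \<open>v\<^sup>-\<^sup>1 s\<^sub>1 v\<close>.  The certificates are checked by evaluation, computing in \<open>B\<^sub>3\<close>
  with the normal form \<open>z\<^sup>k \<cdot> (alternating word in \<Delta>, \<beta>, \<beta>\<^sup>2)\<close> that comes from
  \<open>B\<^sub>3/\<langle>z\<rangle> \<cong> \<int>/2 * \<int>/3\<close>, where \<open>\<Delta> = s\<^sub>1s\<^sub>2s\<^sub>1\<close>, \<open>\<beta> = s\<^sub>1s\<^sub>2\<close> and \<open>z = \<Delta>\<^sup>2 = \<beta>\<^sup>3\<close> is central.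
\<close>

section \<open>Integer powers of a unit\<close>

definition ipow :: "'a::monoid_mult \<Rightarrow> 'a \<Rightarrow> int \<Rightarrow> 'a" where
  "ipow q qi n = (if 0 \<le> n then q ^ nat n else qi ^ nat (- n))"

lemma ipow_int [simp]: "ipow q qi (int n) = q ^ n"
  by (simp add: ipow_def)

lemma ipow_numeral [simp]: "ipow q qi (numeral k) = q ^ numeral k"
  by (simp add: ipow_def)

lemma commute_inverse:
  fixes x q qi :: "'a::monoid_mult"
  assumes "x * q = q * x" "q * qi = 1" "qi * q = 1"
  shows "x * qi = qi * x"
proof -
  have "x * qi = (qi * q) * x * qi" by (simp add: assms(3))
  also have "\<dots> = qi * (x * q) * qi" by (simp add: assms(1) mult.assoc)
  also have "\<dots> = qi * x" by (simp add: assms(2) mult.assoc)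
  finally show ?thesis .
qed

context
  fixes q qi :: "'a::monoid_mult"
  assumes q_qi: "q * qi = 1" and qi_q: "qi * q = 1"
begin

lemma ipow_succ: "ipow q qi (n + 1) = ipow q qi n * q"
proof (cases "0 \<le> n")
  case True
  then have "nat (n + 1) = Suc (nat n)" by simp
  with True show ?thesis by (simp add: ipow_def power_Suc2 del: power_Suc)
next
  case False
  then have "nat (- n) = Suc (nat (- (n + 1)))" by simp
  with False qi_q show ?thesis
    by (auto simp add: ipow_def power_Suc2 mult.assoc simp del: power_Suc)
qed

lemma ipow_pred: "ipow q qi (n - 1) = ipow q qi n * qi"
  using ipow_succ[of "n - 1"] q_qi by (simp add: mult.assoc)

lemma ipow_add: "ipow q qi (m + n) = ipow q qi m * ipow q qi n"
proof (induction n rule: int_induct[where k = 0])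
  case (step1 i)
  then show ?case using ipow_succ[of "m + i"] ipow_succ[of i] by (simp add: add.assoc mult.assoc)
next
  case (step2 i)
  then show ?case using ipow_pred[of "m + i"] ipow_pred[of i] by (simp add: add_diff_eq mult.assoc)
qed (simp add: ipow_def)

lemma ipow_commute:
  assumes "x * q = q * x"
  shows "x * ipow q qi n = ipow q qi n * x"
proof -
  have "x * qi = qi * x" by (rule commute_inverse[OF assms q_qi qi_q])
  with assms show ?thesis
    by (simp add: ipow_def power_commuting_commutes)
qed

end

section \<open>Modules over a ring of central scalars\<close>

definition submodule :: "'a::ring_1 set \<Rightarrow> 'a set \<Rightarrow> bool" where
  "submodule R M \<longleftrightarrow> 0 \<in> M \<and> (\<forall>u\<in>M. \<forall>v\<in>M. u + v \<in> M) \<and> (\<forall>r\<in>R. \<forall>u\<in>M. r * u \<in> M)"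

lemma submodule_zero: "submodule R M \<Longrightarrow> 0 \<in> M"
  and submodule_add: "submodule R M \<Longrightarrow> u \<in> M \<Longrightarrow> v \<in> M \<Longrightarrow> u + v \<in> M"
  and submodule_smult: "submodule R M \<Longrightarrow> r \<in> R \<Longrightarrow> u \<in> M \<Longrightarrow> r * u \<in> M"
  by (simp_all add: submodule_def)

lemma lspan_zero: "0 \<in> lspan R X"
  unfolding lspan_def by (rule CollectI, rule exI[of _ 0]) simp

lemma lspan_insert:
  assumes "v \<in> lspan R X" "r \<in> R" "x \<in> X"
  shows "r * x + v \<in> lspan R X"
proof -
  obtain n :: nat and rs xs where v: "v = (\<Sum>i<n. rs i * xs i)" and h: "\<forall>i<n. rs i \<in> R \<and> xs i \<in> X"
    using assms(1) unfolding lspan_def by blast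
  have "r * x + v = (\<Sum>i<Suc n. (rs(n := r)) i * (xs(n := x)) i)"
    by (simp add: v add.commute)
  moreover have "\<forall>i<Suc n. (rs(n := r)) i \<in> R \<and> (xs(n := x)) i \<in> X"
    using h assms by (auto simp: less_Suc_eq)
  ultimately show ?thesis unfolding lspan_def by blast
qed

lemma lspan_induct [consumes 1, case_names zero insert]:
  assumes "u \<in> lspan R X" and zero: "P 0"
    and insert: "\<And>r x v. r \<in> R \<Longrightarrow> x \<in> X \<Longrightarrow> P v \<Longrightarrow> P (r * x + v)"
  shows "P u"
proof -
  obtain n :: nat and rs xs where u: "u = (\<Sum>i<n. rs i * xs i)" and h: "\<forall>i<n. rs i \<in> R \<and> xs i \<in> X"
    using assms(1) unfolding lspan_def by blast
  have "P (\<Sum>i<m. rs i * xs i)" if "m \<le> n" for m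
    using that
  proof (induction m)
    case (Suc m)
    then have "P (rs m * xs m + (\<Sum>i<m. rs i * xs i))" using h by (intro insert) auto
    then show ?case by (simp add: add.commute)
  qed (simp add: zero)
  then show ?thesis using u by blast
qed

lemma msumI:
  fixes A B :: "'a::ring_1 set"
  shows "u \<in> A \<Longrightarrow> v \<in> B \<Longrightarrow> u + v \<in> A \<oplus>\<^sub>m B"
  unfolding msum_def by blast

lemma msum_memI1:
  fixes A B :: "'a::ring_1 set"
  shows "0 \<in> B \<Longrightarrow> u \<in> A \<Longrightarrow> u \<in> A \<oplus>\<^sub>m B"
  using msumI[of u A 0 B] by simp

lemma msum_memI2:
  fixes A B :: "'a::ring_1 set"
  shows "0 \<in> A \<Longrightarrow> u \<in> B \<Longrightarrow> u \<in> A \<oplus>\<^sub>m B"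
  using msumI[of 0 A u B] by simp

lemma zero_msum:
  fixes A B :: "'a::ring_1 set"
  shows "0 \<in> A \<Longrightarrow> 0 \<in> B \<Longrightarrow> 0 \<in> A \<oplus>\<^sub>m B"
  using msumI[of 0 A 0 B] by simp

lemma msum6_memI:
  fixes A1 A2 A3 A4 A5 A6 :: "'a::ring_1 set"
  assumes "0 \<in> A1" "0 \<in> A2" "0 \<in> A3" "0 \<in> A4" "0 \<in> A5" "0 \<in> A6"
    and "x \<in> A1 \<or> x \<in> A2 \<or> x \<in> A3 \<or> x \<in> A4 \<or> x \<in> A5 \<or> x \<in> A6"
  shows "x \<in> A1 \<oplus>\<^sub>m A2 \<oplus>\<^sub>m A3 \<oplus>\<^sub>m A4 \<oplus>\<^sub>m A5 \<oplus>\<^sub>m A6"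
  using assms by (meson msum_memI1 msum_memI2 zero_msum)

lemma msum_least: "submodule R M \<Longrightarrow> A \<subseteq> M \<Longrightarrow> B \<subseteq> M \<Longrightarrow> A \<oplus>\<^sub>m B \<subseteq> M"
  unfolding msum_def by (auto intro: submodule_add)

lemma submodule_msum:
  assumes A: "submodule R A" and B: "submodule R B"
  shows "submodule R (A \<oplus>\<^sub>m B)"
  unfolding submodule_def
proof (intro conjI ballI)
  show "0 \<in> A \<oplus>\<^sub>m B" using msumI[OF submodule_zero[OF A] submodule_zero[OF B]] by simp
next
  fix u v assume "u \<in> A \<oplus>\<^sub>m B" "v \<in> A \<oplus>\<^sub>m B"
  then obtain u1 u2 v1 v2 where "u = u1 + u2" "v = v1 + v2" "u1 \<in> A" "v1 \<in> A" "u2 \<in> B" "v2 \<in> B"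
    unfolding msum_def by blast
  moreover have "(u1 + v1) + (u2 + v2) \<in> A \<oplus>\<^sub>m B"
    using \<open>u1 \<in> A\<close> \<open>v1 \<in> A\<close> \<open>u2 \<in> B\<close> \<open>v2 \<in> B\<close>
    by (intro msumI submodule_add[OF A] submodule_add[OF B])
  ultimately show "u + v \<in> A \<oplus>\<^sub>m B" by (simp add: add_ac)
next
  fix r u assume "r \<in> R" "u \<in> A \<oplus>\<^sub>m B"
  then obtain u1 u2 where "u = u1 + u2" "u1 \<in> A" "u2 \<in> B"
    unfolding msum_def by blast
  then show "r * u \<in> A \<oplus>\<^sub>m B"
    using msumI[OF submodule_smult[OF A] submodule_smult[OF B]] \<open>r \<in> R\<close> by (simp add: distrib_left)
qed

definition subalgebra :: "'a::ring_1 set \<Rightarrow> 'a set \<Rightarrow> bool" where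
  "subalgebra R S \<longleftrightarrow> submodule R S \<and> 1 \<in> S \<and> (\<forall>x\<in>S. \<forall>y\<in>S. x * y \<in> S)"

definition bimodule :: "'a::ring_1 set \<Rightarrow> 'a set \<Rightarrow> bool" where
  "bimodule S M \<longleftrightarrow> (\<forall>x\<in>S. \<forall>y\<in>S. \<forall>m\<in>M. x * m * y \<in> M)"

lemma bimodule_msum:
  assumes "bimodule S A" "bimodule S B"
  shows "bimodule S (A \<oplus>\<^sub>m B)"
  using assms unfolding bimodule_def msum_def
  by (auto simp: distrib_left distrib_right) (metis (no_types))

lemma words_mult: "w \<in> words G \<Longrightarrow> w' \<in> words G \<Longrightarrow> w * w' \<in> words G"
  by (induction w rule: words.induct) (simp_all add: mult.assoc words.step)

locale central_scalars =
  fixes R :: "'a::ring_1 set"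
  assumes one_in_R: "1 \<in> R"
    and mult_in_R: "r \<in> R \<Longrightarrow> r' \<in> R \<Longrightarrow> r * r' \<in> R"
    and uminus_in_R: "r \<in> R \<Longrightarrow> - r \<in> R"
    and central: "r \<in> R \<Longrightarrow> r * x = x * r"
begin

lemma scalar_mid: "r \<in> R \<Longrightarrow> x * (r * y) = r * (x * y)"
  by (metis central mult.assoc)

lemma submodule_diff: "submodule R M \<Longrightarrow> u \<in> M \<Longrightarrow> v \<in> M \<Longrightarrow> u - v \<in> M"
  using submodule_add[of R M u "-1 * v"] submodule_smult[of R M "-1" v]
  by (simp add: uminus_in_R one_in_R)

lemma lspan_superset: "x \<in> X \<Longrightarrow> x \<in> lspan R X"
  using lspan_insert[OF lspan_zero one_in_R] by simp

lemma submodule_lspan: "submodule R (lspan R X)"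
  unfolding submodule_def
proof (intro conjI ballI)
  fix u v assume "u \<in> lspan R X" "v \<in> lspan R X"
  then show "u + v \<in> lspan R X"
    by (induction u rule: lspan_induct) (simp_all add: add.assoc lspan_insert)
next
  fix r u assume "r \<in> R" "u \<in> lspan R X"
  from \<open>u \<in> lspan R X\<close> show "r * u \<in> lspan R X"
    by (induction u rule: lspan_induct)
      (simp_all add: lspan_zero distrib_left mult.assoc[symmetric] lspan_insert mult_in_R \<open>r \<in> R\<close>)
qed (rule lspan_zero)

lemma lspan_least: "submodule R M \<Longrightarrow> X \<subseteq> M \<Longrightarrow> lspan R X \<subseteq> M"
  by (auto elim!: lspan_induct intro: submodule_zero submodule_add submodule_smult)

lemma submodule_sandwich: "submodule R M \<Longrightarrow> submodule R {u. L * u * Q \<in> M}"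
  by (simp add: submodule_def distrib_left distrib_right scalar_mid mult.assoc)

lemma submodule_left_mult: "submodule R M \<Longrightarrow> submodule R {u. L * u \<in> M}"
  using submodule_sandwich[of M L 1] by simp

lemma lspan_sandwich:
  assumes "submodule R M" "\<And>x. x \<in> X \<Longrightarrow> L * x * Q \<in> M" "u \<in> lspan R X"
  shows "L * u * Q \<in> M"
  using lspan_least[OF submodule_sandwich[OF assms(1)]] assms(2,3) by blast

lemma submodule_mprod2: "submodule R (mprod2 R X Y)"
  and submodule_mprod3: "submodule R (mprod3 R X Y Z)"
  unfolding mprod2_def mprod3_def by (rule submodule_lspan)+

lemma zero_in_mprod: "0 \<in> mprod2 R X Y" "0 \<in> mprod3 R X Y Z"
  unfolding mprod2_def mprod3_def by (rule lspan_zero)+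

lemma mprod2_memI: "x \<in> X \<Longrightarrow> y \<in> Y \<Longrightarrow> x * y \<in> mprod2 R X Y"
  unfolding mprod2_def by (rule lspan_superset) blast

lemma mprod3_memI: "x \<in> X \<Longrightarrow> y \<in> Y \<Longrightarrow> z \<in> Z \<Longrightarrow> x * y * z \<in> mprod3 R X Y Z"
  unfolding mprod3_def by (rule lspan_superset) blast

lemma mprod2_least:
  "submodule R M \<Longrightarrow> (\<And>x y. x \<in> X \<Longrightarrow> y \<in> Y \<Longrightarrow> x * y \<in> M) \<Longrightarrow> mprod2 R X Y \<subseteq> M"
  unfolding mprod2_def by (rule lspan_least) auto

lemma mprod3_least:
  "submodule R M \<Longrightarrow> (\<And>x y z. x \<in> X \<Longrightarrow> y \<in> Y \<Longrightarrow> z \<in> Z \<Longrightarrow> x * y * z \<in> M)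
    \<Longrightarrow> mprod3 R X Y Z \<subseteq> M"
  unfolding mprod3_def by (rule lspan_least) auto

lemma pow_in_usub: "s ^ n \<in> usub R s"
  unfolding usub_def by (rule lspan_superset) blast

lemma subalgebra_lspan:
  assumes one: "1 \<in> X" and mult: "\<And>x y. x \<in> X \<Longrightarrow> y \<in> X \<Longrightarrow> x * y \<in> X"
  shows "subalgebra R (lspan R X)"
proof -
  have "u * v \<in> lspan R X" if u: "u \<in> lspan R X" and v: "v \<in> lspan R X" for u v
  proof -
    have xv: "x * v * 1 \<in> lspan R X" if "x \<in> X" for x
      by (rule lspan_sandwich[OF submodule_lspan _ v]) (use that mult lspan_superset in auto)
    have "1 * u * v \<in> lspan R X"
      by (rule lspan_sandwich[OF submodule_lspan _ u]) (use xv in simp)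
    then show ?thesis by simp
  qed
  then show ?thesis
    unfolding subalgebra_def using submodule_lspan lspan_superset[OF one] by blast
qed

lemma subalgebra_usub: "subalgebra R (usub R s)"
  unfolding usub_def by (rule subalgebra_lspan) (auto intro: exI[of _ 0] simp: power_add[symmetric])

lemma subalgebra_power: "subalgebra R S \<Longrightarrow> x \<in> S \<Longrightarrow> x ^ n \<in> S"
  by (induction n) (auto simp: subalgebra_def)

lemma usub_least:
  assumes S: "subalgebra R S" and "s \<in> S"
  shows "usub R s \<subseteq> S"
  unfolding usub_def
proof (rule lspan_least)
  show "submodule R S" using S by (simp add: subalgebra_def)
  show "{s ^ n |n. True} \<subseteq> S" using subalgebra_power[OF S \<open>s \<in> S\<close>] by blast
qed

lemma mprod2_subalgebra:
  "subalgebra R S \<Longrightarrow> X \<subseteq> S \<Longrightarrow> Y \<subseteq> S \<Longrightarrow> mprod2 R X Y \<subseteq> S"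
  unfolding subalgebra_def by (intro mprod2_least; meson subsetD)

lemma mprod3_subalgebra:
  "subalgebra R S \<Longrightarrow> X \<subseteq> S \<Longrightarrow> Y \<subseteq> S \<Longrightarrow> Z \<subseteq> S \<Longrightarrow> mprod3 R X Y Z \<subseteq> S"
  unfolding subalgebra_def by (intro mprod3_least; meson subsetD)

lemma usub_commute:
  assumes "w * s = s * w" "x \<in> usub R s"
  shows "w * x = x * w"
proof -
  have "submodule R {x. w * x = x * w}"
    unfolding submodule_def by (simp add: distrib_left distrib_right scalar_mid mult.assoc)
  moreover have "{s ^ n |n. True} \<subseteq> {x. w * x = x * w}"
    using power_commuting_commutes[of s w] assms(1) by auto
  ultimately have "usub R s \<subseteq> {x. w * x = x * w}"
    unfolding usub_def by (rule lspan_least)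
  with assms(2) show ?thesis by blast
qed

lemma usub_left_mult:
  assumes M: "submodule R M" and s: "\<And>m. m \<in> M \<Longrightarrow> s * m \<in> M"
    and x: "x \<in> usub R s" and m: "m \<in> M"
  shows "x * m \<in> M"
proof -
  have pow: "s ^ n * m \<in> M" for n
    by (induction n) (simp_all add: m s mult.assoc)
  have "1 * x * m \<in> M"
    by (rule lspan_sandwich[OF M _ x[unfolded usub_def]]) (use pow in auto)
  then show ?thesis by simp
qed

lemma bimodule_mprod3:
  assumes "subalgebra R S"
  shows "bimodule S (mprod3 R S Y S)"
  unfolding bimodule_def
proof (intro ballI)
  fix x y m assume "x \<in> S" "y \<in> S" "m \<in> mprod3 R S Y S"
  have "mprod3 R S Y S \<subseteq> {m. x * m * y \<in> mprod3 R S Y S}"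
  proof (rule mprod3_least[OF submodule_sandwich[OF submodule_mprod3]])
    fix p h q assume "p \<in> S" "h \<in> Y" "q \<in> S"
    then have "(x * p) * h * (q * y) \<in> mprod3 R S Y S"
      using assms \<open>x \<in> S\<close> \<open>y \<in> S\<close> unfolding subalgebra_def by (intro mprod3_memI) auto
    then show "p * h * q \<in> {m. x * m * y \<in> mprod3 R S Y S}" by (simp add: mult.assoc)
  qed
  with \<open>m \<in> mprod3 R S Y S\<close> show "x * m * y \<in> mprod3 R S Y S" by blast
qed

lemma bimodule_mprod2:
  assumes "subalgebra R S" and w: "\<And>x. x \<in> S \<Longrightarrow> w * x = x * w"
  shows "bimodule S (mprod2 R S {w})"
  unfolding bimodule_def
proof (intro ballI)
  fix x y m assume "x \<in> S" "y \<in> S" "m \<in> mprod2 R S {w}"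
  have "mprod2 R S {w} \<subseteq> {m. x * m * y \<in> mprod2 R S {w}}"
  proof (rule mprod2_least[OF submodule_sandwich[OF submodule_mprod2]])
    fix p h assume "p \<in> S" "h \<in> {w}"
    then have "(x * p * y) * w \<in> mprod2 R S {w}"
      using assms(1) \<open>x \<in> S\<close> \<open>y \<in> S\<close> unfolding subalgebra_def by (intro mprod2_memI) auto
    then show "p * h \<in> {m. x * m * y \<in> mprod2 R S {w}}"
      using \<open>h \<in> {w}\<close> w[OF \<open>y \<in> S\<close>] by (simp add: mult.assoc)
  qed
  with \<open>m \<in> mprod2 R S {w}\<close> show "x * m * y \<in> mprod2 R S {w}" by blast
qed

lemma mprod3_left_mult:
  assumes M: "submodule R M" "bimodule (usub R s) M"
    and mid: "\<And>h n. h \<in> Y \<Longrightarrow> L * s ^ n * h \<in> M"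
  shows "mprod3 R (usub R s) Y (usub R s) \<subseteq> {u. L * u \<in> M}"
proof (rule mprod3_least[OF submodule_left_mult[OF M(1)]])
  fix p h q assume p: "p \<in> usub R s" and h: "h \<in> Y" and q: "q \<in> usub R s"
  have "L * p * h \<in> M"
    by (rule lspan_sandwich[OF M(1) _ p[unfolded usub_def]]) (auto intro: mid[OF h])
  moreover have "1 \<in> usub R s" using pow_in_usub[of s 0] by simp
  ultimately have "1 * (L * p * h) * q \<in> M"
    using M(2) q unfolding bimodule_def by blast
  then show "p * h * q \<in> {u. L * u \<in> M}" by (simp add: mult.assoc)
qed

lemma mprod2_left_mult:
  assumes M: "submodule R M" and mid: "\<And>h n. h \<in> Y \<Longrightarrow> L * s ^ n * h \<in> M"
  shows "mprod2 R (usub R s) Y \<subseteq> {u. L * u \<in> M}"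
proof (rule mprod2_least[OF submodule_left_mult[OF M]])
  fix p h assume p: "p \<in> usub R s" and h: "h \<in> Y"
  have "L * p * h \<in> M"
    by (rule lspan_sandwich[OF M _ p[unfolded usub_def]]) (auto intro: mid[OF h])
  then show "p * h \<in> {u. L * u \<in> M}" by (simp add: mult.assoc)
qed

lemma lspan_words_least:
  assumes M: "submodule R M" and "1 \<in> M" and G: "\<And>g m. g \<in> G \<Longrightarrow> m \<in> M \<Longrightarrow> g * m \<in> M"
  shows "lspan R (words G) \<subseteq> M"
proof -
  have "w \<in> M" if "w \<in> words G" for w
    using that by (induction rule: words.induct) (simp_all add: \<open>1 \<in> M\<close> G)
  then show ?thesis using lspan_least[OF M] by blast
qed

lemma subalgebra_lspan_words: "subalgebra R (lspan R (words G))"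
  by (rule subalgebra_lspan) (simp_all add: words.one words_mult)

end

lemma central_scalars_scal:
  fixes a b c d e :: "'a::ring_1"
  assumes "\<And>x. a * x = x * a" "\<And>x. b * x = x * b" "\<And>x. c * x = x * c" "\<And>x. d * x = x * d"
    and "d * e = 1" "e * d = 1"
  shows "central_scalars (scal a b c d e)"
proof
  have e: "e * x = x * e" for x
  proof -
    have "e * x = e * (x * d) * e" by (simp add: assms(5) mult.assoc)
    also have "\<dots> = (e * d) * x * e" by (simp add: assms(4) mult.assoc)
    also have "\<dots> = x * e" by (simp add: assms(6))
    finally show ?thesis .
  qed
  show "r * x = x * r" if "r \<in> scal a b c d e" for r x
    using that
  proof (induction r arbitrary: x)
    case (mul y z) then show ?case by (metis mult.assoc)
  qed (simp_all add: assms e distrib_left distrib_right)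
qed (simp_all add: scal.intros)

section \<open>Computing in the braid group \<open>B\<^sub>3\<close>\<close>

datatype gen = S1 | T1 | S2 | T2

text \<open>A pair \<open>(k, w)\<close> stands for \<open>z\<^sup>k\<close> times the product of the letters \<open>\<Delta>, \<beta>, \<beta>\<^sup>2\<close> in \<open>w\<close>.
  Left multiplication by a letter keeps \<open>w\<close> alternating between \<open>\<Delta>\<close> and a power of \<open>\<beta>\<close>, so
  equal braids get equal representations; soundness only uses that evaluation is multiplicative.\<close>

datatype letter = Delta | Beta | Beta_sq

type_synonym nf = "int \<times> letter list"

fun lmult :: "letter \<Rightarrow> nf \<Rightarrow> nf" where
  "lmult l (k, []) = (k, [l])"
| "lmult Delta (k, Delta # w) = (k + 1, w)"
| "lmult Beta (k, Beta # w) = (k, Beta_sq # w)"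
| "lmult Beta (k, Beta_sq # w) = (k + 1, w)"
| "lmult Beta_sq (k, Beta # w) = (k + 1, w)"
| "lmult Beta_sq (k, Beta_sq # w) = (k + 1, Beta # w)"
| "lmult l (k, w) = (k, l # w)"

definition nf_mult :: "nf \<Rightarrow> nf \<Rightarrow> nf" where
  "nf_mult g h = foldr lmult (snd g) (fst g + fst h, snd h)"

fun gen_nf :: "gen \<Rightarrow> nf" where
  "gen_nf S1 = (-1, [Beta_sq, Delta])"
| "gen_nf T1 = (-1, [Delta, Beta])"
| "gen_nf S2 = (-1, [Delta, Beta_sq])"
| "gen_nf T2 = (-1, [Beta, Delta])"

fun word_nf :: "gen list \<Rightarrow> nf" where
  "word_nf [] = (0, [])"
| "word_nf (g # w) = nf_mult (gen_nf g) (word_nf w)"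

fun gen_inv :: "gen \<Rightarrow> gen" where
  "gen_inv S1 = T1" | "gen_inv T1 = S1" | "gen_inv S2 = T2" | "gen_inv T2 = S2"

definition word_inv :: "gen list \<Rightarrow> gen list" where
  "word_inv w = rev (map gen_inv w)"

definition word_ipow :: "gen list \<Rightarrow> int \<Rightarrow> gen list" where
  "word_ipow w n = concat (replicate (nat \<bar>n\<bar>) (if 0 \<le> n then w else word_inv w))"

definition conj_word :: "gen list \<Rightarrow> gen list" where
  "conj_word v = word_inv v @ S1 # v"

locale braid_rep =
  fixes s1 s2 t1 t2 :: "'a::monoid_mult"
  assumes s1_t1: "s1 * t1 = 1" and t1_s1: "t1 * s1 = 1"
    and s2_t2: "s2 * t2 = 1" and t2_s2: "t2 * s2 = 1"
    and braid: "s1 * s2 * s1 = s2 * s1 * s2"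
begin

definition "delta = s1 * s2 * s1"
definition "beta = s1 * s2"
definition "twist = delta * delta"
definition "twist_inv = t1 * t2 * t1 * (t1 * t2 * t1)"

lemma cancel: "s1 * (t1 * x) = x" "t1 * (s1 * x) = x" "s2 * (t2 * x) = x" "t2 * (s2 * x) = x"
  by (simp_all add: mult.assoc[symmetric] s1_t1 t1_s1 s2_t2 t2_s2)

lemma twist_twist_inv: "twist * twist_inv = 1" and twist_inv_twist: "twist_inv * twist = 1"
  by (simp_all add: twist_def twist_inv_def delta_def mult.assoc cancel s1_t1 t1_s1)

lemma delta_s1: "delta * s1 = s2 * delta"
  by (metis braid delta_def mult.assoc)

lemma delta_s2: "delta * s2 = s1 * delta"
  by (metis braid delta_def mult.assoc)

lemma twist_s1: "twist * s1 = s1 * twist" and twist_s2: "twist * s2 = s2 * twist"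
  unfolding twist_def by (metis delta_s1 delta_s2 mult.assoc)+

lemma beta_cube: "beta * (beta * beta) = twist"
proof -
  have "beta * (beta * beta) = (s1 * s2 * s1) * (s2 * s1 * s2)" by (simp add: beta_def mult.assoc)
  then show ?thesis by (simp only: twist_def delta_def braid)
qed

fun letter_val :: "letter \<Rightarrow> 'a" where
  "letter_val Delta = delta" | "letter_val Beta = beta" | "letter_val Beta_sq = beta * beta"

definition nf_val :: "nf \<Rightarrow> 'a" where
  "nf_val g = ipow twist twist_inv (fst g) * prod_list (map letter_val (snd g))"

fun gen_val :: "gen \<Rightarrow> 'a" where
  "gen_val S1 = s1" | "gen_val T1 = t1" | "gen_val S2 = s2" | "gen_val T2 = t2"

definition word_val :: "gen list \<Rightarrow> 'a" where
  "word_val w = prod_list (map gen_val w)"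

lemma word_val_simps [simp]:
  "word_val [] = 1" "word_val (g # w) = gen_val g * word_val w" "word_val (v @ w) = word_val v * word_val w"
  by (simp_all add: word_val_def)

lemma twist_commute_letter: "twist * letter_val l = letter_val l * twist"
proof -
  have comm: "twist * (x * y) = (x * y) * twist" if "twist * x = x * twist" "twist * y = y * twist" for x y
    by (metis that mult.assoc)
  show ?thesis
    by (cases l) (simp_all add: delta_def beta_def comm twist_s1 twist_s2)
qed

lemma twist_commute_letters: "twist * prod_list (map letter_val w) = prod_list (map letter_val w) * twist"
  by (induction w) (simp_all, metis twist_commute_letter mult.assoc)

lemma ipow_twist_commute:
  "twist * x = x * twist \<Longrightarrow> ipow twist twist_inv k * x = x * ipow twist twist_inv k"
  using ipow_commute[OF twist_twist_inv twist_inv_twist, of x k] by simp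

lemma nf_val_Cons: "nf_val (k, l # w) = letter_val l * nf_val (k, w)"
  using ipow_twist_commute[OF twist_commute_letter, of k l]
  by (simp add: nf_val_def mult.assoc[symmetric])

lemma nf_val_succ: "nf_val (k + 1, w) = twist * nf_val (k, w)"
  using ipow_twist_commute[of twist k]
  by (simp add: nf_val_def ipow_succ[OF twist_twist_inv twist_inv_twist] mult.assoc)

lemma nf_val_lmult: "nf_val (lmult l g) = letter_val l * nf_val g"
proof -
  obtain k w where g: "g = (k, w)" by fastforce
  have z: "delta * delta = twist" "beta * (beta * beta) = twist" "beta * beta * beta = twist"
    "beta * beta * (beta * beta) = twist * beta" "twist * beta = beta * twist"
    using beta_cube twist_commute_letter[of Beta] by (simp_all add: twist_def mult.assoc[symmetric])
  show ?thesis
  proof (cases w)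
    case Nil
    then show ?thesis by (simp add: g nf_val_Cons)
  next
    case (Cons h r)
    show ?thesis
      unfolding g Cons
      by (cases l; cases h) (simp_all add: nf_val_Cons nf_val_succ z mult.assoc[symmetric])
  qed
qed

lemma nf_val_mult: "nf_val (nf_mult g h) = nf_val g * nf_val h"
proof -
  have "nf_val (foldr lmult w x) = prod_list (map letter_val w) * nf_val x" for w x
    by (induction w) (simp_all add: nf_val_lmult mult.assoc)
  moreover have "nf_val (fst g + fst h, snd h) = ipow twist twist_inv (fst g) * nf_val h"
    by (simp add: nf_val_def ipow_add[OF twist_twist_inv twist_inv_twist] mult.assoc)
  ultimately show ?thesis
    by (simp add: nf_mult_def nf_val_def ipow_twist_commute[OF twist_commute_letters] mult.assoc)
qed

lemma nf_val_gen: "nf_val (gen_nf g) = gen_val g"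
proof -
  have "beta * beta * delta = (s1 * s2 * s1) * (s2 * s1 * s2) * s1"
    by (simp add: beta_def delta_def mult.assoc)
  then have S1: "beta * beta * delta = twist * s1"
    by (simp only: twist_def delta_def braid)
  have "delta * beta = delta * beta * (s1 * t1)" by (simp add: s1_t1)
  then have T1: "delta * beta = twist * t1"
    by (simp add: twist_def delta_def beta_def mult.assoc)
  have S2: "delta * (beta * beta) = twist * s2"
    by (simp add: twist_def delta_def beta_def mult.assoc)
  have "beta * delta = beta * delta * (s2 * t2)" by (simp add: s2_t2)
  also have "\<dots> = (s1 * s2 * s1) * (s2 * s1 * s2) * t2" by (simp add: beta_def delta_def mult.assoc)
  finally have T2: "beta * delta = twist * t2"
    by (simp only: twist_def delta_def braid)
  have cancel: "twist_inv * (twist * x) = x" for x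
    by (simp add: mult.assoc[symmetric] twist_inv_twist)
  show ?thesis
    by (cases g) (simp_all add: nf_val_def ipow_def S1 T1 S2 T2 cancel)
qed

lemma nf_val_word: "nf_val (word_nf w) = word_val w"
  by (induction w) (simp_all add: nf_val_mult nf_val_gen nf_val_def[of "(0, [])"] ipow_def)

lemma word_val_inv: "word_val (word_inv w) * word_val w = 1" "word_val w * word_val (word_inv w) = 1"
proof -
  have g: "gen_val (gen_inv g) * gen_val g = 1" "gen_val g * gen_val (gen_inv g) = 1" for g
    by (cases g; simp add: s1_t1 t1_s1 s2_t2 t2_s2)+
  show "word_val (word_inv w) * word_val w = 1" "word_val w * word_val (word_inv w) = 1"
    by (induction w) (simp_all add: word_inv_def, (metis g mult.assoc mult_1_left)+)
qed

lemma word_val_ipow: "word_val (word_ipow w n) = ipow (word_val w) (word_val (word_inv w)) n"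
proof -
  have "word_val (concat (replicate k v)) = word_val v ^ k" for k v
    by (induction k) simp_all
  then show ?thesis by (simp add: word_ipow_def ipow_def)
qed

end

section \<open>Certificates\<close>

text \<open>A certificate step produces a new element of \<open>B\<^sub>3\<close> from a generator of a summand (\<open>Gen\<close>),
  from the \<open>j\<close>-th element produced so far by multiplying with \<open>s\<^sub>1\<^sup>i\<close> on the left and \<open>s\<^sub>1\<^sup>k\<close> on the
  right (\<open>Conj\<close>), or from the \<open>j\<close>-th element \<open>g\<close> as \<open>g q\<^sup>n\<close> with \<open>q = v\<^sup>-\<^sup>1 s\<^sub>1 v\<close>, provided
  \<open>g q, g q\<^sup>2, g q\<^sup>3\<close> have been produced already (\<open>Line\<close>).\<close>

datatype cert_step = Gen "gen list" | Conj nat int int | Line nat "gen list" int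

fun step_valid :: "gen list list \<Rightarrow> nf list \<Rightarrow> cert_step \<Rightarrow> bool" where
  "step_valid gens known (Gen w) \<longleftrightarrow> set w \<subseteq> {S2, T2} \<or> w \<in> set gens"
| "step_valid gens known (Conj j i k) \<longleftrightarrow> j < length known"
| "step_valid gens known (Line j v n) \<longleftrightarrow> j < length known \<and>
     (\<forall>m\<in>{1, 2, 3}. nf_mult (known ! j) (word_nf (word_ipow (conj_word v) m)) \<in> set known)"

fun step_nf :: "nf list \<Rightarrow> cert_step \<Rightarrow> nf" where
  "step_nf known (Gen w) = word_nf w"
| "step_nf known (Conj j i k) =
     nf_mult (word_nf (word_ipow [S1] i)) (nf_mult (known ! j) (word_nf (word_ipow [S1] k)))"
| "step_nf known (Line j v n) = nf_mult (known ! j) (word_nf (word_ipow (conj_word v) n))"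

text \<open>Written with \<open>if\<close> rather than a \<open>case\<close> on an option-valued step: when the simplifier
  evaluates a certificate, it would otherwise unfold the remaining run under the \<open>case\<close> binder.\<close>

fun run_cert :: "gen list list \<Rightarrow> nf list \<Rightarrow> cert_step list \<Rightarrow> nf list option" where
  "run_cert gens known [] = Some known"
| "run_cert gens known (st # sts) =
     (if step_valid gens known st then run_cert gens (known @ [step_nf known st]) sts else None)"

definition certifies :: "gen list list \<Rightarrow> cert_step list \<Rightarrow> gen list list \<Rightarrow> bool" where
  "certifies gens cert targets \<longleftrightarrow>
     (case run_cert gens [] cert of
        None \<Rightarrow> False
      | Some known \<Rightarrow> word_nf ` set targets \<subseteq> set known)"

section \<open>The quartic Hecke algebra of \<open>B\<^sub>3\<close>\<close>

locale quartic_hecke = braid_rep s1 s2 t1 t2 + central_scalars R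
  for s1 s2 t1 t2 :: "'a::ring_1" and R :: "'a set" +
  fixes a b c d e :: 'a
  assumes coeffs: "a \<in> R" "b \<in> R" "c \<in> R" "d \<in> R" "e \<in> R"
    and e_d: "e * d = 1"
    and s1_relation: "s1 ^ 4 = a * s1 ^ 3 + b * s1 ^ 2 + c * s1 + d"
begin

definition quartic :: "'a \<Rightarrow> bool" where
  "quartic q \<longleftrightarrow> q ^ 4 = a * q ^ 3 + b * q ^ 2 + c * q + d"

lemma quartic_s1: "quartic s1"
  using s1_relation by (simp add: quartic_def)

abbreviation "u1 \<equiv> usub R s1"
abbreviation "u2 \<equiv> usub R s2"

lemma quartic_conj:
  assumes q: "quartic q" and p: "p' * p = 1" "p * p' = 1"
  shows "quartic (p' * q * p)"
proof -
  have pow: "(p' * q * p) ^ k = p' * q ^ k * p" for k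
  proof (induction k)
    case (Suc k)
    have "(p' * q * p) ^ Suc k = p' * q ^ k * p * (p' * q * p)"
      by (simp only: power_Suc2 Suc.IH)
    also have "\<dots> = p' * q ^ k * (p * p') * q * p"
      by (simp only: mult.assoc)
    also have "\<dots> = p' * q ^ Suc k * p"
      by (simp add: p(2) power_Suc2 mult.assoc del: power_Suc)
    finally show ?case .
  qed (simp add: p(1))
  have sandwich: "p' * (r * x) * p = r * (p' * x * p)" if "r \<in> R" for r x
    by (simp only: scalar_mid[OF that] mult.assoc)
  have "p' * d * p = d * (p' * p)" by (simp add: central[OF coeffs(4)] mult.assoc)
  with q p(1) show ?thesis
    unfolding quartic_def pow
    by (simp add: distrib_left distrib_right sandwich coeffs)
qed

lemma quartic_s2: "quartic s2"
proof -
  have "quartic (t1 * t2 * s1 * (s2 * s1))"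
    by (rule quartic_conj[OF quartic_s1]) (simp_all add: mult.assoc cancel s1_t1 t1_s1 s2_t2)
  moreover have "t1 * t2 * s1 * (s2 * s1) = t1 * t2 * (s1 * s2 * s1)" by (simp add: mult.assoc)
  also have "\<dots> = t1 * t2 * (s2 * s1 * s2)" by (simp only: braid)
  also have "\<dots> = s2" by (simp add: mult.assoc cancel)
  ultimately show ?thesis by simp
qed

lemma inverse_in_usub:
  assumes q: "quartic q" and qi: "q * qi = 1" "qi * q = 1"
  shows "qi \<in> usub R q"
proof -
  define T where "T = e * (q ^ 3 - a * q ^ 2 - b * q - c * 1)"
  have S: "submodule R (usub R q)"
    using subalgebra_usub unfolding subalgebra_def by blast
  have p: "q ^ 3 \<in> usub R q" "q ^ 2 \<in> usub R q" "q \<in> usub R q" "1 \<in> usub R q"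
    using pow_in_usub[of q 3] pow_in_usub[of q 2] pow_in_usub[of q 1] pow_in_usub[of q 0] by simp_all
  have "T \<in> usub R q"
    unfolding T_def by (intro submodule_smult[OF S] submodule_diff[OF S] coeffs p)
  moreover have "q * T = 1"
  proof -
    have pw: "q * q ^ 3 = q ^ 4" "q * q ^ 2 = q ^ 3" "q * q = q ^ 2"
      by (simp_all add: numeral_eq_Suc)
    have "q * (q ^ 3 - a * q ^ 2 - b * q - c * 1) = q ^ 4 - a * q ^ 3 - b * q ^ 2 - c * q"
      by (simp add: right_diff_distrib scalar_mid coeffs pw central[OF coeffs(3)])
    then have "q * T = e * (q ^ 4 - a * q ^ 3 - b * q ^ 2 - c * q)"
      by (simp add: T_def scalar_mid[OF coeffs(5)])
    also have "\<dots> = e * d"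
      using q by (simp add: quartic_def algebra_simps)
    finally show ?thesis by (simp add: e_d)
  qed
  moreover have "qi = T"
  proof -
    have "qi = qi * (q * T)" using \<open>q * T = 1\<close> by simp
    also have "\<dots> = T" by (simp add: mult.assoc[symmetric] qi(2))
    finally show ?thesis .
  qed
  ultimately show ?thesis by simp
qed

lemma ipow_in_usub:
  assumes "quartic q" "q * qi = 1" "qi * q = 1"
  shows "ipow q qi n \<in> usub R q"
proof -
  have "qi ^ k \<in> usub R q" for k
    using subalgebra_usub[of q] inverse_in_usub[OF assms]
    by (induction k) (simp_all add: subalgebra_def)
  then show ?thesis by (simp add: ipow_def pow_in_usub)
qed

lemma t1_in_u1: "t1 \<in> u1"
  by (rule inverse_in_usub[OF quartic_s1 s1_t1 t1_s1])

lemma t2_in_u2: "t2 \<in> u2"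
  by (rule inverse_in_usub[OF quartic_s2 s2_t2 t2_s2])

lemma word_in_u2: "set w \<subseteq> {S2, T2} \<Longrightarrow> word_val w \<in> u2"
proof (induction w)
  case Nil
  then show ?case using pow_in_usub[of s2 0] by simp
next
  case (Cons g w)
  then have "gen_val g \<in> u2"
    using pow_in_usub[of s2 1] t2_in_u2 by auto
  with Cons subalgebra_usub[of s2] show ?case by (simp add: subalgebra_def)
qed

lemma recurrence_closed:
  fixes f :: "int \<Rightarrow> 'a"
  assumes N: "submodule R N"
    and rec: "\<And>m. f (m + 4) = a * f (m + 3) + b * f (m + 2) + c * f (m + 1) + d * f m"
    and init: "\<And>j. t \<le> j \<Longrightarrow> j \<le> t + 3 \<Longrightarrow> f j \<in> N"
  shows "f n \<in> N"
proof -
  define P where "P i \<longleftrightarrow> f i \<in> N \<and> f (i + 1) \<in> N \<and> f (i + 2) \<in> N \<and> f (i + 3) \<in> N" for i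
  have up: "P (i + 1)" if "P i" for i
  proof -
    have "f (i + 4) \<in> N"
      using that unfolding rec P_def by (intro submodule_add[OF N] submodule_smult[OF N] coeffs) auto
    with that show ?thesis by (simp add: P_def add.assoc)
  qed
  have down: "P (i - 1)" if "P i" for i
  proof -
    have shift: "i - 1 + 4 = i + 3" "i - 1 + 3 = i + 2" "i - 1 + 2 = i + 1" "i - 1 + 1 = i" by simp_all
    have "d * f (i - 1) = f (i + 3) - a * f (i + 2) - b * f (i + 1) - c * f i"
      using rec[of "i - 1"] unfolding shift by (simp add: algebra_simps)
    then have "f (i - 1) = e * (f (i + 3) - a * f (i + 2) - b * f (i + 1) - c * f i)"
      by (metis e_d mult.assoc mult_1_left)
    also have "\<dots> \<in> N"
      using that unfolding P_def by (intro submodule_smult[OF N] submodule_diff[OF N] coeffs) auto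
    finally show ?thesis using that by (simp add: P_def shift)
  qed
  have "P t" using init by (simp add: P_def)
  then have "P n" by (induction n rule: int_induct[where k = t]) (simp_all add: up down)
  then show ?thesis by (simp add: P_def)
qed

lemma ipow_window:
  assumes M: "submodule R M" and q: "quartic q" "q * qi = 1" "qi * q = 1"
    and init: "\<And>j. t \<le> j \<Longrightarrow> j \<le> t + 3 \<Longrightarrow> P * ipow q qi j * Q \<in> M"
  shows "P * ipow q qi n * Q \<in> M"
proof -
  have step: "ipow q qi (m + numeral k) = ipow q qi m * q ^ numeral k" for m k
    using ipow_add[OF q(2,3), of m "int (numeral k)"] by simp
  have "ipow q qi n \<in> {x. P * x * Q \<in> M}"
  proof (rule recurrence_closed[OF submodule_sandwich[OF M]])
    fix m
    show "ipow q qi (m + 4) = a * ipow q qi (m + 3) + b * ipow q qi (m + 2) + c * ipow q qi (m + 1)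
        + d * ipow q qi m"
      using q(1) by (simp add: step ipow_succ[OF q(2,3)] quartic_def distrib_left scalar_mid coeffs
          central[OF coeffs(4)])
  qed (use init in auto)
  then show ?thesis by simp
qed

lemma conj_window:
  assumes M: "submodule R M"
    and init: "\<And>m. 0 \<le> m \<Longrightarrow> m \<le> 3 \<Longrightarrow> P * word_val (word_ipow (conj_word v) m) \<in> M"
  shows "P * word_val (word_ipow (conj_word v) n) \<in> M"
proof -
  let ?q = "word_val (conj_word v)" and ?qi = "word_val (word_inv (conj_word v))"
  have "quartic (word_val (word_inv v) * s1 * word_val v)"
    by (rule quartic_conj[OF quartic_s1 word_val_inv])
  then have "quartic ?q" by (simp add: conj_word_def mult.assoc)
  then have "P * ipow ?q ?qi n * 1 \<in> M"
    by (rule ipow_window[OF M _ word_val_inv(2,1), where t = 0]) (use init in \<open>simp add: word_val_ipow\<close>)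
  then show ?thesis by (simp add: word_val_ipow)
qed

lemma certificate_step_sound:
  assumes M: "submodule R M" "bimodule u1 M" "u2 \<subseteq> M"
    and gens: "\<And>w. w \<in> set gens \<Longrightarrow> word_val w \<in> M"
    and known: "\<And>g. g \<in> set known \<Longrightarrow> nf_val g \<in> M"
    and valid: "step_valid gens known st"
  shows "nf_val (step_nf known st) \<in> M"
proof (cases st)
  case (Gen w)
  then show ?thesis
    using valid word_in_u2 M(3) gens by (auto simp: nf_val_word)
next
  case (Conj j i k)
  have "nf_val (known ! j) \<in> M" using valid known Conj by simp
  moreover have "ipow s1 t1 n \<in> u1" for n
    by (rule ipow_in_usub[OF quartic_s1 s1_t1 t1_s1])
  ultimately have "ipow s1 t1 i * nf_val (known ! j) * ipow s1 t1 k \<in> M"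
    using M(2) unfolding bimodule_def by blast
  moreover have "word_val (word_ipow [S1] n) = ipow s1 t1 n" for n
    by (simp add: word_val_ipow word_inv_def)
  ultimately show ?thesis by (simp add: Conj nf_val_mult nf_val_word mult.assoc)
next
  case (Line j v n)
  have "nf_val (known ! j) * word_val (word_ipow (conj_word v) n) \<in> M"
  proof (rule conj_window[OF M(1)])
    fix m :: int assume "0 \<le> m" "m \<le> 3"
    then consider "m = 0" | "m \<in> {1, 2, 3}" by (auto, arith)
    then show "nf_val (known ! j) * word_val (word_ipow (conj_word v) m) \<in> M"
    proof cases
      case 1
      then show ?thesis using valid known Line by (simp add: word_ipow_def)
    next
      case 2
      with valid Line have "nf_mult (known ! j) (word_nf (word_ipow (conj_word v) m)) \<in> set known"
        by auto
      then show ?thesis using known by (fastforce simp: nf_val_mult nf_val_word)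
    qed
  qed
  then show ?thesis by (simp add: Line nf_val_mult nf_val_word)
qed

lemma certifies_sound:
  assumes M: "submodule R M" "bimodule u1 M" "u2 \<subseteq> M"
    and gens: "\<And>w. w \<in> set gens \<Longrightarrow> word_val w \<in> M"
    and cert: "certifies gens cert targets" and w: "w \<in> set targets"
  shows "word_val w \<in> M"
proof -
  have run: "\<forall>g\<in>set known'. nf_val g \<in> M"
    if "run_cert gens known sts = Some known'" "\<forall>g\<in>set known. nf_val g \<in> M" for known sts known'
    using that
  proof (induction sts arbitrary: known)
    case (Cons st sts)
    have valid: "step_valid gens known st"
      using Cons.prems(1) by (simp split: if_splits)
    have "\<forall>g\<in>set (known @ [step_nf known st]). nf_val g \<in> M"
      using Cons.prems(2) certificate_step_sound[OF M gens _ valid] by auto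
    moreover have "run_cert gens (known @ [step_nf known st]) sts = Some known'"
      using Cons.prems(1) valid by simp
    ultimately show ?case by (rule Cons.IH[rotated])
  qed simp
  obtain known where known: "run_cert gens [] cert = Some known" "word_nf ` set targets \<subseteq> set known"
    using cert by (auto simp: certifies_def split: option.splits)
  have "word_nf w \<in> set known" using known(2) w by blast
  then have "nf_val (word_nf w) \<in> M" using run[OF known(1)] by simp
  then show ?thesis by (simp add: nf_val_word)
qed

end

section \<open>The modules \<open>U\<close> and \<open>U\<^sub>\<omega>\<close>\<close>

definition U_omega_gens :: "gen list list" where
  "U_omega_gens = [[S2, T1, S2], [T2, S1, T2], [S2, S1, S1, S2], [T2, T1, T1, T2],
     [T2, T1, T1, T2, T2, T1, T1, T2]]"

definition U_omega_targets :: "gen list list" where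
  "U_omega_targets =
     [S2 # word_ipow [S1] i @ h. h \<leftarrow> [[S2, T1, S2], [T2, S1, T2]], i \<leftarrow> [-1..2]] @
     [S2 # h. h \<leftarrow> [[S2, S1, S1, S2], [T2, T1, T1, T2], [T2, T1, T1, T2, T2, T1, T1, T2]]] @
     [S2 # word_ipow [S1] i @ word_ipow [S2] k. i \<leftarrow> [-1..2], k \<leftarrow> [-2..1]]"

definition U_omega_cert :: "cert_step list" where
  "U_omega_cert = [
    Gen [T2, T1, T1, T2, T2, T1, T1, T2], Conj 0 (-4) (-1), Gen [T2, T1, T1, T2],
    Conj 2 (-4) (-1), Gen [T2], Conj 4 (-4) (-3), Gen [T2, T2], Conj 6 (-3) (-2),
    Gen [T2, S1, T2], Conj 8 (-3) (-2), Line 3 [S2] (-1), Conj 10 0 (-2), Line 3 [S2] (-2),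
    Conj 12 1 (-1), Conj 10 3 2, Conj 4 (-3) 0, Gen [T2, T2, T2], Conj 16 (-1) 1,
    Conj 8 (-3) (-1), Gen [S2], Conj 19 (-2) (-2), Gen [S2, T1, S2], Conj 21 (-2) (-1),
    Line 18 [S2] (-1), Conj 23 2 2, Line 14 [T2, T2, S1] (-1), Conj 25 (-1) (-3),
    Line 1 [S2] (-1), Conj 27 1 0, Conj 0 (-4) 0, Conj 10 1 (-2), Conj 12 2 (-1),
    Line 28 [S2] 5, Conj 32 (-1) 1, Conj 10 1 2, Conj 6 (-1) (-3), Conj 23 2 (-1),
    Line 33 [S2] 4, Conj 37 (-1) 1, Conj 12 0 1, Conj 10 0 1, Conj 2 (-4) 0, Conj 4 (-4) (-2),
    Line 39 [S2, S1] 6, Conj 43 1 0, Gen [], Conj 45 (-4) 2, Conj 21 (-3) 0, Gen [S2, S2],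
    Conj 48 (-3) 0, Conj 19 (-2) 1, Gen [S2, S1, S1, S2], Conj 51 (-4) 1, Line 47 [S2] (-1),
    Conj 53 2 0, Line 38 [S2, S2] 4, Conj 55 1 0, Conj 4 (-2) (-2), Conj 19 (-4) (-1),
    Conj 21 (-3) (-1), Line 9 [S2, S2, T1] 4, Conj 60 3 1, Conj 48 1 0, Conj 21 (-4) 0,
    Conj 48 (-4) 0, Conj 19 (-3) 1, Conj 51 (-4) 0, Line 63 [S2] 4, Conj 67 2 1, Conj 43 2 1,
    Conj 4 1 0, Conj 48 (-2) 1, Conj 8 (-4) (-1), Conj 4 (-4) 0, Conj 19 (-3) (-2),
    Line 72 [S2] 4, Conj 75 2 2, Conj 23 3 1, Conj 6 1 0, Conj 53 3 1, Line 77 [T2, T2, T2] 4,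
    Conj 80 (-2) (-1), Conj 60 1 1, Gen [S2, S2, S2], Conj 83 (-2) 0, Conj 19 (-1) 2,
    Line 81 [S2] (-1), Conj 86 2 (-2), Conj 80 0 (-3), Conj 60 3 (-1), Conj 83 0 (-2),
    Line 87 [S2, T1, T1] 5, Conj 91 0 2, Conj 4 (-2) 0, Conj 10 0 3, Conj 8 (-1) 0,
    Conj 4 (-1) 1, Conj 19 0 (-1), Conj 19 (-1) 1, Conj 19 0 1, Conj 19 1 1, Conj 21 (-1) 1,
    Conj 48 (-1) 1, Conj 19 0 2]"

lemma U_omega_certified: "certifies U_omega_gens U_omega_cert U_omega_targets"
  by code_simp

definition U_gens :: "gen list list" where
  "U_gens = [[S2, T1, S2], [T2, S1, T2], [T2, T1, T1, T2], [S2, T1, T1, S2], [T2, T2, T1, T1, T2, T2]]"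

definition U_cert :: "cert_step list" where
  "U_cert = [
    Gen [S2, T1, T1, S2], Conj 0 (-3) 0, Gen [S2, T1, S2], Conj 2 (-3) 0, Gen [S2, S2],
    Conj 4 (-3) 0, Gen [S2], Conj 6 (-2) 1, Line 1 [S2] 4, Conj 8 (-1) 4, Gen [T2, T1, T1, T2],
    Conj 10 (-4) (-1), Gen [T2], Conj 12 (-4) (-3), Gen [T2, T2], Conj 14 (-3) (-2),
    Gen [T2, S1, T2], Conj 16 (-3) (-2), Line 11 [S2] (-1), Conj 18 0 (-1), Line 11 [S2] (-2),
    Conj 20 1 0, Conj 18 3 2, Conj 12 (-3) 0, Gen [T2, T2, T2], Conj 24 (-1) 1,
    Conj 16 (-3) (-1), Conj 6 (-2) (-2), Conj 2 (-2) (-1), Line 26 [S2] (-1), Conj 29 2 2,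
    Line 22 [T2, T2, S1] (-1), Conj 31 (-1) (-2), Gen [T2, T2, T1, T1, T2, T2],
    Conj 33 (-1) (-1), Line 19 [S2, S1] (-1), Conj 35 0 4]"

lemma U_certified: "certifies U_gens U_cert [[S2, S1, S1, S2], [T2, T1, T1, T2, T2, T1, T1, T2]]"
  by code_simp

context quartic_hecke
begin

abbreviation "omega \<equiv> s2 * s1 ^ 2 * s2"
abbreviation "omega_inv \<equiv> t2 * t1 ^ 2 * t2"

definition U_omega :: "'a set" where
  "U_omega = mprod3 R u1 u2 u1 \<oplus>\<^sub>m mprod3 R u1 {s2 * t1 * s2} u1 \<oplus>\<^sub>m mprod3 R u1 {t2 * s1 * t2} u1
     \<oplus>\<^sub>m mprod2 R u1 {omega} \<oplus>\<^sub>m mprod2 R u1 {omega_inv} \<oplus>\<^sub>m mprod2 R u1 {omega_inv ^ 2}"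

abbreviation "U \<equiv> Ufull R s1 s2 t1 t2"

lemma s1_omega: "s1 * omega = omega * s1"
proof -
  have "s1 * omega = (s1 * s2 * s1) * s1 * s2" by (simp add: power2_eq_square mult.assoc)
  also have "\<dots> = s2 * s1 * (s2 * s1 * s2)" unfolding braid by (simp only: mult.assoc)
  also have "\<dots> = omega * s1" unfolding braid[symmetric] by (simp add: power2_eq_square mult.assoc)
  finally show ?thesis .
qed

lemma omega_omega_inv: "omega * omega_inv = 1" "omega_inv * omega = 1"
  by (simp_all add: power2_eq_square mult.assoc cancel s2_t2 t2_s2)

lemma omega_commute_u1:
  assumes "x \<in> u1"
  shows "omega * x = x * omega" "omega_inv * x = x * omega_inv" "omega_inv ^ 2 * x = x * omega_inv ^ 2"
proof -
  have "s1 * omega_inv = omega_inv * s1"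
    by (rule commute_inverse[OF s1_omega omega_omega_inv])
  then have "omega_inv ^ 2 * s1 = s1 * omega_inv ^ 2"
    by (simp add: power_commuting_commutes)
  with s1_omega \<open>s1 * omega_inv = omega_inv * s1\<close>
  show "omega * x = x * omega" "omega_inv * x = x * omega_inv" "omega_inv ^ 2 * x = x * omega_inv ^ 2"
    by (metis usub_commute assms)+
qed

lemma word_val_mid:
  "word_val [S2, T1, S2] = s2 * t1 * s2" "word_val [T2, S1, T2] = t2 * s1 * t2"
  "word_val [S2, S1, S1, S2] = omega" "word_val [T2, T1, T1, T2] = omega_inv"
  "word_val [T2, T1, T1, T2, T2, T1, T1, T2] = omega_inv ^ 2"
  "word_val [S2, T1, T1, S2] = s2 * t1 ^ 2 * s2" "word_val [T2, T2, T1, T1, T2, T2] = t2 ^ 2 * t1 ^ 2 * t2 ^ 2"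
  by (simp_all add: power2_eq_square mult.assoc)

lemma mid_in_mprod: "h \<in> Y \<Longrightarrow> h \<in> mprod3 R u1 Y u1" "h \<in> Y \<Longrightarrow> h \<in> mprod2 R u1 Y"
  using mprod3_memI[of 1 u1 h Y 1 u1] mprod2_memI[of 1 u1 h Y] pow_in_usub[of s1 0] by simp_all

lemma submodule_U_omega: "submodule R U_omega" and submodule_U: "submodule R U"
  unfolding U_omega_def Ufull_def Uprime_def
  by (intro submodule_msum submodule_mprod2 submodule_mprod3)+

lemma U_omega_memI:
  assumes "x \<in> mprod3 R u1 u2 u1 \<or> x \<in> mprod3 R u1 {s2 * t1 * s2} u1 \<or> x \<in> mprod3 R u1 {t2 * s1 * t2} u1
    \<or> x \<in> mprod2 R u1 {omega} \<or> x \<in> mprod2 R u1 {omega_inv} \<or> x \<in> mprod2 R u1 {omega_inv ^ 2}"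
  shows "x \<in> U_omega"
  unfolding U_omega_def
  by (rule msum6_memI[OF _ _ _ _ _ _ assms]) (rule zero_in_mprod)+

lemma U_memI:
  assumes "x \<in> mprod3 R u1 u2 u1 \<or> x \<in> mprod3 R u1 {s2 * t1 * s2} u1 \<or> x \<in> mprod3 R u1 {t2 * s1 * t2} u1
    \<or> x \<in> mprod2 R u1 {omega_inv} \<or> x \<in> mprod3 R u1 {s2 * t1 ^ 2 * s2} u1
    \<or> x \<in> mprod3 R u1 {t2 ^ 2 * t1 ^ 2 * t2 ^ 2} u1"
  shows "x \<in> U"
  unfolding Ufull_def Uprime_def
  by (rule msum6_memI[OF _ _ _ _ _ _ assms]) (rule zero_in_mprod)+

lemma bimodule_U_omega: "bimodule u1 U_omega" and bimodule_U: "bimodule u1 U"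
  unfolding U_omega_def Ufull_def Uprime_def
  by (intro bimodule_msum bimodule_mprod3 bimodule_mprod2 subalgebra_usub; simp add: omega_commute_u1)+

lemma U_omega_contains:
  "u2 \<subseteq> U_omega" "\<And>w. w \<in> set U_omega_gens \<Longrightarrow> word_val w \<in> U_omega"
  unfolding U_omega_gens_def
  by (auto simp del: word_val_simps simp: word_val_mid mid_in_mprod intro!: U_omega_memI)

lemma U_contains:
  "u2 \<subseteq> U" "\<And>w. w \<in> set U_gens \<Longrightarrow> word_val w \<in> U"
  unfolding U_gens_def
  by (auto simp del: word_val_simps simp: word_val_mid mid_in_mprod intro!: U_memI)

lemma omega_in_U: "omega \<in> U" "omega_inv ^ 2 \<in> U"
proof -
  note certified = certifies_sound[OF submodule_U bimodule_U U_contains U_certified]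
  from certified[of "[S2, S1, S1, S2]"] certified[of "[T2, T1, T1, T2, T2, T1, T1, T2]"]
  show "omega \<in> U" "omega_inv ^ 2 \<in> U" by (simp_all del: word_val_simps add: word_val_mid)
qed

lemma U_omega_targets_in_U_omega: "w \<in> set U_omega_targets \<Longrightarrow> word_val w \<in> U_omega"
  by (rule certifies_sound[OF submodule_U_omega bimodule_U_omega U_omega_contains U_omega_certified])

lemma word_val_target: "word_val (S2 # word_ipow [S1] i @ h) = s2 * ipow s1 t1 i * word_val h"
  and word_val_ipow_S2: "word_val (word_ipow [S2] k) = ipow s2 t2 k"
  by (simp_all add: word_val_ipow word_inv_def mult.assoc)

lemma U_omega_target_values:
  "-1 \<le> i \<Longrightarrow> i \<le> 2 \<Longrightarrow> s2 * ipow s1 t1 i * (s2 * t1 * s2) \<in> U_omega"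
  "-1 \<le> i \<Longrightarrow> i \<le> 2 \<Longrightarrow> s2 * ipow s1 t1 i * (t2 * s1 * t2) \<in> U_omega"
  "-1 \<le> i \<Longrightarrow> i \<le> 2 \<Longrightarrow> -2 \<le> k \<Longrightarrow> k \<le> 1 \<Longrightarrow> s2 * ipow s1 t1 i * ipow s2 t2 k \<in> U_omega"
  "s2 * omega \<in> U_omega" "s2 * omega_inv \<in> U_omega" "s2 * omega_inv ^ 2 \<in> U_omega"
proof -
  define P where "P w \<longleftrightarrow> word_val w \<in> U_omega" for w
  have "\<forall>w\<in>set U_omega_targets. P w" using U_omega_targets_in_U_omega by (simp add: P_def)
  then have windows: "\<forall>i\<in>{-1..2}. P (S2 # word_ipow [S1] i @ [S2, T1, S2]) \<and> P (S2 # word_ipow [S1] i @ [T2, S1, T2])"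
    and corner: "\<forall>i\<in>{-1..2}. \<forall>k\<in>{-2..1}. P (S2 # word_ipow [S1] i @ word_ipow [S2] k)"
    and omegas: "P (S2 # [S2, S1, S1, S2]) \<and> P (S2 # [T2, T1, T1, T2]) \<and> P (S2 # [T2, T1, T1, T2, T2, T1, T1, T2])"
    by (simp_all add: U_omega_targets_def ball_Un ball_UN)
  show "-1 \<le> i \<Longrightarrow> i \<le> 2 \<Longrightarrow> s2 * ipow s1 t1 i * (s2 * t1 * s2) \<in> U_omega"
    "-1 \<le> i \<Longrightarrow> i \<le> 2 \<Longrightarrow> s2 * ipow s1 t1 i * (t2 * s1 * t2) \<in> U_omega"
    using windows unfolding P_def by (simp_all del: word_val_simps add: word_val_target word_val_mid)
  show "-1 \<le> i \<Longrightarrow> i \<le> 2 \<Longrightarrow> -2 \<le> k \<Longrightarrow> k \<le> 1 \<Longrightarrow> s2 * ipow s1 t1 i * ipow s2 t2 k \<in> U_omega"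
    using corner unfolding P_def by (simp del: word_val_simps add: word_val_target word_val_ipow_S2)
  have S2_Cons: "word_val (S2 # h) = s2 * word_val h" for h by simp
  show "s2 * omega \<in> U_omega" "s2 * omega_inv \<in> U_omega" "s2 * omega_inv ^ 2 \<in> U_omega"
    using omegas unfolding P_def
    by (simp_all only: S2_Cons[of "[S2, S1, S1, S2]"] S2_Cons[of "[T2, T1, T1, T2]"]
        S2_Cons[of "[T2, T1, T1, T2, T2, T1, T1, T2]"] word_val_mid)
qed

lemma s2_s1_pow_window:
  assumes "\<And>i. -1 \<le> i \<Longrightarrow> i \<le> 2 \<Longrightarrow> s2 * ipow s1 t1 i * h \<in> U_omega"
  shows "s2 * s1 ^ n * h \<in> U_omega"
proof -
  have "s2 * ipow s1 t1 (int n) * h \<in> U_omega"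
    by (rule ipow_window[OF submodule_U_omega quartic_s1 s1_t1 t1_s1, where t = "-1"]) (simp add: assms)
  then show ?thesis by simp
qed

lemma s2_s1_pow_mid:
  "s2 * s1 ^ n * (s2 * t1 * s2) \<in> U_omega" "s2 * s1 ^ n * (t2 * s1 * t2) \<in> U_omega"
  "s2 * s1 ^ n * omega \<in> U_omega" "s2 * s1 ^ n * omega_inv \<in> U_omega"
  "s2 * s1 ^ n * omega_inv ^ 2 \<in> U_omega"
proof -
  show "s2 * s1 ^ n * (s2 * t1 * s2) \<in> U_omega" "s2 * s1 ^ n * (t2 * s1 * t2) \<in> U_omega"
    by (rule s2_s1_pow_window, rule U_omega_target_values; assumption)+
  have pow: "s1 ^ n \<in> u1" and one: "1 \<in> u1" using pow_in_usub[of s1 n] pow_in_usub[of s1 0] by simp_all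
  have right: "s2 * w * s1 ^ n \<in> U_omega" if "s2 * w \<in> U_omega" for w
    using bimodule_U_omega that pow one unfolding bimodule_def by (metis mult_1_left)
  have swap: "s2 * s1 ^ n * w = s2 * w * s1 ^ n" if "w * s1 ^ n = s1 ^ n * w" for w
    by (simp add: mult.assoc that)
  show "s2 * s1 ^ n * omega \<in> U_omega" "s2 * s1 ^ n * omega_inv \<in> U_omega"
    "s2 * s1 ^ n * omega_inv ^ 2 \<in> U_omega"
    unfolding swap[OF omega_commute_u1(1)[OF pow]] swap[OF omega_commute_u1(2)[OF pow]]
      swap[OF omega_commute_u1(3)[OF pow]]
    by (rule right, rule U_omega_target_values)+
qed

lemma s2_s1_pow_u2:
  assumes "h \<in> u2"
  shows "s2 * s1 ^ n * h \<in> U_omega"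
proof -
  have row: "s2 * ipow s1 t1 i * ipow s2 t2 k \<in> U_omega" if "-1 \<le> i" "i \<le> 2" for i k
  proof -
    have "s2 * ipow s1 t1 i * ipow s2 t2 k * 1 \<in> U_omega"
      by (rule ipow_window[OF submodule_U_omega quartic_s2 s2_t2 t2_s2, where t = "-2"])
        (simp add: U_omega_target_values(3) that)
    then show ?thesis by simp
  qed
  have "s2 * s1 ^ n * s2 ^ k \<in> U_omega" for k
    using row[of _ "int k"] by (intro s2_s1_pow_window) simp
  then have "s2 * s1 ^ n * h * 1 \<in> U_omega"
    by (intro lspan_sandwich[OF submodule_U_omega _ assms[unfolded usub_def]]) auto
  then show ?thesis by simp
qed

lemma s2_mult_U_omega:
  assumes "m \<in> U_omega"
  shows "s2 * m \<in> U_omega"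
proof -
  define S where "S = {u. s2 * u \<in> U_omega}"
  have S: "submodule R S" unfolding S_def by (rule submodule_left_mult[OF submodule_U_omega])
  have "U_omega \<subseteq> S"
    unfolding U_omega_def
  proof (intro msum_least[OF S])
    show "mprod3 R u1 u2 u1 \<subseteq> S" unfolding S_def
      by (rule mprod3_left_mult[OF submodule_U_omega bimodule_U_omega]) (rule s2_s1_pow_u2)
    show "mprod3 R u1 {s2 * t1 * s2} u1 \<subseteq> S" "mprod3 R u1 {t2 * s1 * t2} u1 \<subseteq> S" unfolding S_def
      by (rule mprod3_left_mult[OF submodule_U_omega bimodule_U_omega]; simp add: s2_s1_pow_mid)+
    show "mprod2 R u1 {omega} \<subseteq> S" "mprod2 R u1 {omega_inv} \<subseteq> S" "mprod2 R u1 {omega_inv ^ 2} \<subseteq> S"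
      unfolding S_def by (rule mprod2_left_mult[OF submodule_U_omega]; simp add: s2_s1_pow_mid)+
  qed
  with assms show ?thesis unfolding S_def by blast
qed

lemma U_subset_span: "U \<subseteq> lspan R (words {s1, s2, t1, t2})"
proof -
  let ?H = "lspan R (words {s1, s2, t1, t2})"
  have H: "subalgebra R ?H" by (rule subalgebra_lspan_words)
  have gens: "s1 \<in> ?H" "s2 \<in> ?H" "t1 \<in> ?H" "t2 \<in> ?H"
    using words.step[OF _ words.one, of _ "{s1, s2, t1, t2}"] by (auto intro: lspan_superset)
  have mult: "x * y \<in> ?H" if "x \<in> ?H" "y \<in> ?H" for x y
    using H that by (simp add: subalgebra_def)
  show ?thesis
    unfolding Ufull_def Uprime_def
    by (intro msum_least[OF submodule_lspan] mprod3_subalgebra[OF H] mprod2_subalgebra[OF H]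
        usub_least[OF H]) (simp_all add: gens mult subalgebra_power[OF H])
qed

lemma span_subset_U_omega: "lspan R (words {s1, s2, t1, t2}) \<subseteq> U_omega"
proof (rule lspan_words_least[OF submodule_U_omega])
  show "1 \<in> U_omega" using U_omega_contains(1) pow_in_usub[of s2 0] by auto
next
  fix g m assume g: "g \<in> {s1, s2, t1, t2}" and m: "m \<in> U_omega"
  have u1_mult: "x * m \<in> U_omega" if "x \<in> u1" for x
    using bimodule_U_omega that m pow_in_usub[of s1 0] unfolding bimodule_def by (metis mult_1_right power_0)
  have "t2 * m \<in> U_omega" by (rule usub_left_mult[OF submodule_U_omega s2_mult_U_omega t2_in_u2 m])
  then show "g * m \<in> U_omega"
    using g u1_mult[OF t1_in_u1] u1_mult[of s1] pow_in_usub[of s1 1] s2_mult_U_omega[OF m] by auto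
qed

lemma U_omega_subset_U: "U_omega \<subseteq> U"
proof -
  have mid: "mprod2 R u1 {w} \<subseteq> U" if "w \<in> U" for w
  proof (rule mprod2_least[OF submodule_U])
    fix p h assume "p \<in> u1" "h \<in> {w}"
    then show "p * h \<in> U"
      using bimodule_U that pow_in_usub[of s1 0] unfolding bimodule_def by (metis mult_1_right power_0 singletonD)
  qed
  show ?thesis
    unfolding U_omega_def
  proof (intro msum_least[OF submodule_U])
    show "mprod2 R u1 {omega} \<subseteq> U" "mprod2 R u1 {omega_inv ^ 2} \<subseteq> U"
      by (rule mid, rule omega_in_U)+
  qed (auto intro!: U_memI)
qed

lemma U_omega_eq_U: "U_omega = U"
  using U_omega_subset_U U_subset_span span_subset_U_omega by blast

lemma span_words_eq_U: "lspan R (words {s1, s2, t1, t2}) = U"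
  using U_omega_subset_U U_subset_span span_subset_U_omega by blast

end

theorem theorem3p3:
  fixes a b c d e s1 s2 t1 t2 :: "'a::ring_1"
  assumes central: "\<And>x. a * x = x * a" "\<And>x. b * x = x * b"
                   "\<And>x. c * x = x * c" "\<And>x. d * x = x * d"
    and dinv: "d * e = 1" "e * d = 1"
    and inv1: "s1 * t1 = 1" "t1 * s1 = 1"
    and inv2: "s2 * t2 = 1" "t2 * s2 = 1"
    and braid: "s1 * s2 * s1 = s2 * s1 * s2"
    and quart1: "s1 ^ 4 = a * s1 ^ 3 + b * s1 ^ 2 + c * s1 + d"
    and quart2: "s2 ^ 4 = a * s2 ^ 3 + b * s2 ^ 2 + c * s2 + d"
  shows "Ufull (scal a b c d e) s1 s2 t1 t2 =
            mprod3 (scal a b c d e) (usub (scal a b c d e) s1) (usub (scal a b c d e) s2)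
                   (usub (scal a b c d e) s1)
         \<oplus>\<^sub>m mprod3 (scal a b c d e) (usub (scal a b c d e) s1) {s2 * t1 * s2}
                   (usub (scal a b c d e) s1)
         \<oplus>\<^sub>m mprod3 (scal a b c d e) (usub (scal a b c d e) s1) {t2 * s1 * t2}
                   (usub (scal a b c d e) s1)
         \<oplus>\<^sub>m mprod2 (scal a b c d e) (usub (scal a b c d e) s1) {s2 * s1 ^ 2 * s2}
         \<oplus>\<^sub>m mprod2 (scal a b c d e) (usub (scal a b c d e) s1) {t2 * t1 ^ 2 * t2}
         \<oplus>\<^sub>m mprod2 (scal a b c d e) (usub (scal a b c d e) s1) {(t2 * t1 ^ 2 * t2) ^ 2}
       \<and> lspan (scal a b c d e) (words {s1, s2, t1, t2}) = Ufull (scal a b c d e) s1 s2 t1 t2"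
proof -
  interpret quartic_hecke s1 s2 t1 t2 "scal a b c d e" a b c d e
    unfolding quartic_hecke_def quartic_hecke_axioms_def braid_rep_def
    using central_scalars_scal[OF central dinv] inv1 inv2 braid dinv(2) quart1
    by (simp add: scal.intros)
  show ?thesis
    using U_omega_eq_U span_words_eq_U unfolding U_omega_def by simp
qed

end
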